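(* With $\chi=1$ the trivial character, the restriction maps $j_1:\mathcal S^*(\overline{\mathcal O}_1)^{\chi}\to\mathcal S^*(\mathcal O_1)^{\chi}$ and $j_1':\mathcal S^*(\overline{\mathcal O}_1)^{\chi,\infty}\to\mathcal S^*(\mathcal O_1)^{\chi,\infty}$ are isomorphisms.
   Context: $F$ nonarchimedean local field of characteristic $0$, $G=G'=\mathrm{GL}_2(F)$ acting on $M_2:=M_{2\times2}(F)$ by $(g_1,g_2)\cdot M=g_1Mg_2^{-1}$. Let $\mathcal O_i\subset M_2$ be the set of matrices of rank $i$; $\overline{\mathcal O}_1=\mathcal O_1\cup\{0\}$. For a $G\times G'$-stable locally closed $X\subset M_2$, $\mathcal S(X)$ is the space of locally constant compactly supported functions on $X$ with $((g_1,g_2)f)(M)=f(g_1^{-1}Mg_2)$, and $\mathcal S^*(X)$ is its algebraic dual with the contragredient action. For a character $\chi$ of $G$, $\mathcal S^*(X)^\chi$ is the space of $G$-invariant vectors in $\mathcal S^*(X)\otimes(|\det|\boxtimes|\det|^{-1})\otimes\chi^{-1}$ (here $G$ is the first factor). A vector $v$ in a representation $V$ of $G$ is generalized $\chi$-invariant if there is $k\ge0$ with $(g_0-\chi(g_0))(g_1-\chi(g_1))\cdots(g_k-\chi(g_k))v=0$ for all $g_0,\dots,g_k\in G$; $\mathcal S^*(X)^{\chi,\infty}$ is the space of generalized $(G,\chi)$-invariant vectors in $\mathcal S^*(X)\otimes(|\det|\boxtimes|\det|^{-1})$. The maps $j_1,j_1'$ are induced by restriction of distributions from the closed set $\overline{\mathcal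 O}_1$ to its open subset $\mathcal O_1$. *)

theory Defs
  imports "HOL-Analysis.Analysis"
begin

text \<open>Nonarchimedean local fields of characteristic 0, presented as a field of
characteristic 0 (type class field_char_0) together with its normalized absolute value.\<close>

definition nonarch_abs :: "('a::field \<Rightarrow> real) \<Rightarrow> bool" where
  "nonarch_abs absF \<longleftrightarrow>
     absF 0 = 0 \<and> (\<forall>x. x \<noteq> 0 \<longrightarrow> absF x > 0) \<and>
     (\<forall>x y. absF (x * y) = absF x * absF y) \<and>
     (\<forall>x y. absF (x + y) \<le> max (absF x) (absF y)) \<and>
     (\<exists>x. absF x \<noteq> 0 \<and> absF x \<noteq> 1)"

text \<open>Local compactness (and completeness): the closed unit ball (ring of integers)
is (sequentially) compact for the metric induced by the absolute value.\<close>
definition nonarch_local_field :: "('a::field \<Rightarrow> real) \<Rightarrow> bool" where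
  "nonarch_local_field absF \<longleftrightarrow> nonarch_abs absF \<and>
     (\<forall>s::nat \<Rightarrow> _. (\<forall>n. absF (s n) \<le> 1) \<longrightarrow>
        (\<exists>r l. strict_mono r \<and> absF l \<le> 1 \<and> (\<lambda>n. absF (s (r n) - l)) \<longlonglongrightarrow> 0))"

text \<open>Normalization: the absolute value of a uniformizer is q^{-1}, where q is the
cardinality of the residue field (R is a set of residue representatives).\<close>
definition normalized_abs :: "('a::field \<Rightarrow> real) \<Rightarrow> bool" where
  "normalized_abs absF \<longleftrightarrow>
     (\<exists>w R. absF w < 1 \<and> (\<forall>x. absF x < 1 \<longrightarrow> absF x \<le> absF w) \<and>
        finite R \<and> (\<forall>x\<in>R. absF x \<le> 1) \<and>
        (\<forall>x\<in>R. \<forall>y\<in>R. x \<noteq> y \<longrightarrow> absF (x - y) = 1) \<and>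
        (\<forall>x. absF x \<le> 1 \<longrightarrow> (\<exists>y\<in>R. absF (x - y) < 1)) \<and>
        absF w = 1 / real (card R))"

type_synonym 'a mat2 = "'a ^ 2 ^ 2"

definition GL2 :: "'a::field mat2 set" where
  "GL2 = {g. det g \<noteq> 0}"

definition O1 :: "'a::field mat2 set" where
  "O1 = {M. M \<noteq> 0 \<and> det M = 0}"

definition O1bar :: "'a::field mat2 set" where
  "O1bar = {M. det M = 0}"

definition mclose :: "('a \<Rightarrow> real) \<Rightarrow> real \<Rightarrow> 'a::field mat2 \<Rightarrow> 'a mat2 \<Rightarrow> bool" where
  "mclose absF e N M \<longleftrightarrow> (\<forall>i j. absF (N $ i $ j - M $ i $ j) < e)"

definition seq_compact_in :: "('a::field \<Rightarrow> real) \<Rightarrow> 'a mat2 set \<Rightarrow> bool" where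
  "seq_compact_in absF K \<longleftrightarrow>
     (\<forall>s::nat \<Rightarrow> _. (\<forall>n. s n \<in> K) \<longrightarrow>
        (\<exists>r L. strict_mono r \<and> L \<in> K \<and>
           (\<forall>i j. (\<lambda>n. absF (s (r n) $ i $ j - L $ i $ j)) \<longlonglongrightarrow> 0)))"

text \<open>S(X): locally constant compactly supported functions on X, represented as
functions on M_2 vanishing outside X.\<close>
definition SX :: "('a::field \<Rightarrow> real) \<Rightarrow> 'a mat2 set \<Rightarrow> ('a mat2 \<Rightarrow> complex) set" where
  "SX absF X = {f. (\<forall>M. M \<notin> X \<longrightarrow> f M = 0) \<and>
       (\<forall>M\<in>X. \<exists>e>0. \<forall>N\<in>X. mclose absF e N M \<longrightarrow> f N = f M) \<and>
       (\<exists>K. K \<subseteq> X \<and> seq_compact_in absF K \<and> {M. f M \<noteq> 0} \<subseteq> K)}"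

text \<open>S*(X): algebraic dual (complex-linear functionals on S(X)), normalized to be 0
off S(X).\<close>
definition SdualX :: "('a::field \<Rightarrow> real) \<Rightarrow> 'a mat2 set \<Rightarrow> (('a mat2 \<Rightarrow> complex) \<Rightarrow> complex) set" where
  "SdualX absF X = {\<xi>. (\<forall>f. f \<notin> SX absF X \<longrightarrow> \<xi> f = 0) \<and>
       (\<forall>f\<in>SX absF X. \<forall>h\<in>SX absF X. \<forall>c a. \<xi> (\<lambda>M. c * f M + a * h M) = c * \<xi> f + a * \<xi> h)}"

text \<open>Action of g in the first factor G on S*(X) tensor (|det| boxtimes |det|^{-1}):
(g xi)(f) = |det g| * xi((g,1)^{-1} f), where ((g,1)^{-1} f)(M) = f(g M).\<close>
definition act1 :: "('a::field \<Rightarrow> real) \<Rightarrow> 'a mat2 set \<Rightarrow> 'a mat2 \<Rightarrow>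
    (('a mat2 \<Rightarrow> complex) \<Rightarrow> complex) \<Rightarrow> (('a mat2 \<Rightarrow> complex) \<Rightarrow> complex)" where
  "act1 absF X g \<xi> = (\<lambda>f. if f \<in> SX absF X
       then complex_of_real (absF (det g)) * \<xi> (\<lambda>M. f (g ** M)) else 0)"

definition Sinv :: "('a::field \<Rightarrow> real) \<Rightarrow> 'a mat2 set \<Rightarrow> (('a mat2 \<Rightarrow> complex) \<Rightarrow> complex) set" where
  "Sinv absF X = {\<xi>\<in>SdualX absF X. \<forall>g\<in>GL2. act1 absF X g \<xi> = \<xi>}"

fun iter_diff :: "('a::field \<Rightarrow> real) \<Rightarrow> 'a mat2 set \<Rightarrow> 'a mat2 list \<Rightarrow>
    (('a mat2 \<Rightarrow> complex) \<Rightarrow> complex) \<Rightarrow> (('a mat2 \<Rightarrow> complex) \<Rightarrow> complex)" where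
  "iter_diff absF X [] \<xi> = \<xi>"
| "iter_diff absF X (g # gs) \<xi> =
     (\<lambda>f. act1 absF X g (iter_diff absF X gs \<xi>) f - iter_diff absF X gs \<xi> f)"

definition Sgeninv :: "('a::field \<Rightarrow> real) \<Rightarrow> 'a mat2 set \<Rightarrow> (('a mat2 \<Rightarrow> complex) \<Rightarrow> complex) set" where
  "Sgeninv absF X = {\<xi>\<in>SdualX absF X. \<exists>k::nat. \<forall>gs. length gs = Suc k \<and> set gs \<subseteq> GL2 \<longrightarrow>
       iter_diff absF X gs \<xi> = (\<lambda>f. 0)}"

text \<open>Restriction of distributions from O1bar to its open subset O1 (dual of extension
by zero S(O1) \<rightarrow> S(O1bar)).\<close>
definition restr1 :: "('a::field \<Rightarrow> real) \<Rightarrow> (('a mat2 \<Rightarrow> complex) \<Rightarrow> complex) \<Rightarrow>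
    (('a mat2 \<Rightarrow> complex) \<Rightarrow> complex)" where
  "restr1 absF \<xi> = (\<lambda>f. if f \<in> SX absF O1 then \<xi> f else 0)"

end

(*
  A distribution on O1bar whose restriction to O1 vanishes is a multiple of the evaluation
  delta0 at the origin, and GL2 acts on delta0 by the character |det g|, not trivially. Taking
  a central z with |det z| <> 1, the operator (z - 1)^n multiplies delta0 by (|det z| - 1)^n,
  which is nonzero; hence a generalized invariant distribution that vanishes on O1 vanishes,
  and restriction is injective. For surjectivity, a distribution xi on O1 extends to O1bar by
  f |-> xi (f - f 0 * bump), with bump the indicator of the integral matrices of rank at most
  one, and this extension is then corrected by a multiple of delta0.
*)
theory Submission
  imports Defs "HOL-Library.Infinite_Set"
begin

section \<open>Matrices\<close>

lemma mclose_min [simp]: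
  "mclose absF (min d e) N M \<longleftrightarrow> mclose absF d N M \<and> mclose absF e N M"
  unfolding mclose_def by auto

lemma mat_matrix_mult: "mat t ** A = (\<chi> i j. t * A $ i $ j)"
  for A :: "'a::semiring_1 ^ 'n ^ 'm"
  unfolding matrix_matrix_mult_def mat_def
  by (auto simp: if_distrib if_distribR sum.delta'[OF finite] cong: if_cong)

lemma matrix_mat_mult: "A ** mat t = (\<chi> i j. A $ i $ j * t)"
  for A :: "'a::semiring_1 ^ 'n ^ 'm"
  unfolding matrix_matrix_mult_def mat_def
  by (auto simp: if_distrib if_distribR sum.delta'[OF finite] cong: if_cong)

lemma mat_matrix_mult_commute: "mat t ** A = A ** mat t"
  for A :: "'a::comm_semiring_1 ^ 'n ^ 'n"
  by (simp add: mat_matrix_mult matrix_mat_mult mult.commute)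

definition GL2_stable :: "'a::field mat2 set \<Rightarrow> bool" where
  "GL2_stable X \<longleftrightarrow> (\<forall>g\<in>GL2. \<forall>M. g ** M \<in> X \<longleftrightarrow> M \<in> X)"

lemma GL2_inverse:
  assumes "g \<in> GL2"
  obtains B :: "'a::field mat2" where "B ** g = mat 1" "g ** B = mat 1"
  using assms unfolding GL2_def invertible_det_nz[symmetric] invertible_def by blast

lemma GL2_stable_O1bar: "GL2_stable O1bar"
  unfolding GL2_stable_def O1bar_def GL2_def by (simp add: det_mul)

lemma GL2_stable_O1: "GL2_stable O1"
  unfolding GL2_stable_def
proof (intro ballI allI)
  fix g M :: "'a mat2"
  assume g: "g \<in> GL2"
  then obtain B where "B ** g = mat 1" by (rule GL2_inverse)
  then have "M = B ** (g ** M)"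
    by (simp add: matrix_mul_assoc)
  then have "g ** M = 0 \<longleftrightarrow> M = 0"
    by force
  then show "g ** M \<in> O1 \<longleftrightarrow> M \<in> O1"
    using g unfolding GL2_def O1_def by (simp add: det_mul)
qed

lemma O1_subset_O1bar: "O1 \<subseteq> O1bar"
  unfolding O1_def O1bar_def by auto

lemma zero_in_O1bar: "0 \<in> O1bar"
  unfolding O1bar_def by (simp add: det_2)

lemma zero_notin_O1: "0 \<notin> O1"
  unfolding O1_def by simp

section \<open>Nonarchimedean absolute values\<close>

locale nonarch_valued_field =
  fixes absF :: "'a::field \<Rightarrow> real"
  assumes nonarch_abs: "nonarch_abs absF"
begin

lemma absF_0 [simp]: "absF 0 = 0"
  using nonarch_abs by (simp add: nonarch_abs_def)

lemma absF_pos: "x \<noteq> 0 \<Longrightarrow> 0 < absF x"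
  using nonarch_abs by (simp add: nonarch_abs_def)

lemma absF_mult: "absF (x * y) = absF x * absF y"
  using nonarch_abs by (simp add: nonarch_abs_def)

lemma absF_ultrametric: "absF (x + y) \<le> max (absF x) (absF y)"
  using nonarch_abs by (simp add: nonarch_abs_def)

lemma absF_nontrivial: "\<exists>x. absF x \<noteq> 0 \<and> absF x \<noteq> 1"
  using nonarch_abs by (simp add: nonarch_abs_def)

lemma absF_nonneg [simp]: "0 \<le> absF x"
  by (cases "x = 0") (auto dest: absF_pos)

lemma absF_eq_0_iff [simp]: "absF x = 0 \<longleftrightarrow> x = 0"
  using absF_pos by fastforce

lemma absF_minus [simp]: "absF (- x) = absF x"
proof -
  have "absF (- x) * absF (- x) = absF x * absF x"
    by (simp flip: absF_mult)
  then show ?thesis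
    by (metis absF_nonneg power2_eq_imp_eq power2_eq_square)
qed

lemma absF_minus_commute: "absF (x - y) = absF (y - x)"
  by (metis absF_minus minus_diff_eq)

lemma absF_triangle: "absF (x + y) \<le> absF x + absF y"
  using absF_ultrametric[of x y] absF_nonneg[of x] absF_nonneg[of y] by linarith

lemma absF_diff_triangle: "absF (x - z) \<le> absF (x - y) + absF (y - z)"
  using absF_triangle[of "x - y" "y - z"] by simp

lemma absF_le_1_cong:
  assumes "absF (x - y) < 1"
  shows "absF x \<le> 1 \<longleftrightarrow> absF y \<le> 1"
proof -
  have "absF x \<le> max (absF (x - y)) (absF y)"
    using absF_ultrametric[of "x - y" y] by simp
  moreover have "absF y \<le> max (absF (x - y)) (absF x)"
    using absF_ultrametric[of "y - x" x] absF_minus_commute[of x y] by simp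
  ultimately show ?thesis
    using assms by auto
qed

lemma absF_sum_le: "absF (sum f S) \<le> (\<Sum>i\<in>S. absF (f i))"
proof (induction S rule: infinite_finite_induct)
  case (insert x F)
  then show ?case using absF_triangle[of "f x" "sum f F"] by simp
qed simp_all

definition abs_tendsto :: "(nat \<Rightarrow> 'a) \<Rightarrow> 'a \<Rightarrow> bool" where
  "abs_tendsto s l \<longleftrightarrow> (\<lambda>n. absF (s n - l)) \<longlonglongrightarrow> 0"

lemma abs_tendsto_by_bound:
  assumes "\<And>n. absF (s n - l) \<le> g n" "g \<longlonglongrightarrow> 0"
  shows "abs_tendsto s l"
  unfolding abs_tendsto_def by (rule Lim_null_comparison[OF _ assms(2)]) (use assms(1) in auto)

lemma abs_tendsto_unique:
  assumes "abs_tendsto s l" "abs_tendsto s l'"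
  shows "l = l'"
proof -
  have "absF (l - l') \<le> absF (s n - l) + absF (s n - l')" for n
    using absF_triangle[of "l - s n" "s n - l'"] by (simp add: absF_minus_commute)
  moreover have "(\<lambda>n. absF (s n - l) + absF (s n - l')) \<longlonglongrightarrow> 0"
    using assms tendsto_add_zero unfolding abs_tendsto_def by blast
  ultimately have "absF (l - l') \<le> 0"
    by (intro tendsto_le[OF trivial_limit_sequentially _ tendsto_const]) auto
  then show ?thesis
    by (metis absF_eq_0_iff absF_nonneg antisym eq_iff_diff_eq_0)
qed

lemma abs_tendsto_const: "abs_tendsto (\<lambda>n. c) c"
  by (simp add: abs_tendsto_def)

lemma abs_tendsto_diff:
  assumes "abs_tendsto a a0" "abs_tendsto b b0"
  shows "abs_tendsto (\<lambda>n. a n - b n) (a0 - b0)"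
proof -
  have "absF ((a n - b n) - (a0 - b0)) \<le> absF (a n - a0) + absF (b n - b0)" for n
    using absF_triangle[of "a n - a0" "b0 - b n"] by (simp add: absF_minus_commute[of "b n"] algebra_simps)
  moreover have "(\<lambda>n. absF (a n - a0) + absF (b n - b0)) \<longlonglongrightarrow> 0"
    using assms tendsto_add_zero unfolding abs_tendsto_def by blast
  ultimately show ?thesis
    by (rule abs_tendsto_by_bound)
qed

lemma abs_tendsto_mult:
  assumes "abs_tendsto a a0" "abs_tendsto b b0"
  shows "abs_tendsto (\<lambda>n. a n * b n) (a0 * b0)"
proof -
  have "a n * b n - a0 * b0 = (a n - a0) * (b n - b0) + (a0 * (b n - b0) + (a n - a0) * b0)" for n
    by (simp add: algebra_simps)
  then have "absF (a n * b n - a0 * b0)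
      \<le> absF (a n - a0) * absF (b n - b0) + (absF a0 * absF (b n - b0) + absF (a n - a0) * absF b0)" for n
    by (metis absF_mult absF_triangle add_left_mono order_trans)
  moreover have "(\<lambda>n. absF (a n - a0) * absF (b n - b0)
      + (absF a0 * absF (b n - b0) + absF (a n - a0) * absF b0)) \<longlonglongrightarrow> 0"
    using assms unfolding abs_tendsto_def
    by (auto intro!: tendsto_add_zero tendsto_mult_zero tendsto_mult_right_zero tendsto_mult_left_zero)
  ultimately show ?thesis
    by (rule abs_tendsto_by_bound)
qed

definition mat_tendsto :: "(nat \<Rightarrow> 'a mat2) \<Rightarrow> 'a mat2 \<Rightarrow> bool" where
  "mat_tendsto s L \<longleftrightarrow> (\<forall>i j. abs_tendsto (\<lambda>n. s n $ i $ j) (L $ i $ j))"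

lemma mat_tendsto_unique:
  assumes "mat_tendsto s L" "mat_tendsto s L'"
  shows "L = L'"
proof -
  have "L $ i $ j = L' $ i $ j" for i j
    using assms abs_tendsto_unique unfolding mat_tendsto_def by blast
  then show ?thesis by (simp add: vec_eq_iff)
qed

lemma mat_tendsto_det:
  assumes "mat_tendsto s L"
  shows "abs_tendsto (\<lambda>n. det (s n)) (det L)"
proof -
  have "abs_tendsto (\<lambda>n. s n $ i $ j) (L $ i $ j)" for i j
    using assms unfolding mat_tendsto_def by blast
  then show ?thesis
    unfolding det_2 by (intro abs_tendsto_diff abs_tendsto_mult)
qed

lemma absF_mat_mult_diff_le:
  "absF ((g ** N) $ i $ j - (g ** M) $ i $ j)
     \<le> (\<Sum>k\<in>UNIV. absF (g $ i $ k) * absF (N $ k $ j - M $ k $ j))"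
proof -
  have "(g ** N) $ i $ j - (g ** M) $ i $ j = (\<Sum>k\<in>UNIV. g $ i $ k * (N $ k $ j - M $ k $ j))"
    by (simp add: matrix_matrix_mult_def sum_subtractf right_diff_distrib)
  then show ?thesis
    using absF_sum_le[of "\<lambda>k. g $ i $ k * (N $ k $ j - M $ k $ j)" UNIV] by (simp add: absF_mult)
qed

lemma mat_tendsto_mult_left:
  assumes "mat_tendsto s L"
  shows "mat_tendsto (\<lambda>n. g ** s n) (g ** L)"
  unfolding mat_tendsto_def
proof (intro allI)
  fix i j
  have "(\<lambda>n. absF (s n $ k $ j - L $ k $ j)) \<longlonglongrightarrow> 0" for k
    using assms unfolding mat_tendsto_def abs_tendsto_def by blast
  then have "(\<lambda>n. \<Sum>k\<in>UNIV. absF (g $ i $ k) * absF (s n $ k $ j - L $ k $ j)) \<longlonglongrightarrow> 0"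
    by (intro tendsto_null_sum tendsto_mult_right_zero)
  then show "abs_tendsto (\<lambda>n. (g ** s n) $ i $ j) ((g ** L) $ i $ j)"
    by (rule abs_tendsto_by_bound[OF absF_mat_mult_diff_le])
qed

lemma mat_tendsto_eventually_mclose:
  assumes "mat_tendsto s L" "mclose absF e L M"
  shows "\<forall>\<^sub>F n in sequentially. mclose absF e (s n) M"
proof -
  have "\<forall>\<^sub>F n in sequentially. absF (s n $ i $ j - M $ i $ j) < e" for i j
  proof -
    have "\<forall>\<^sub>F n in sequentially. absF (s n $ i $ j - L $ i $ j) < e - absF (L $ i $ j - M $ i $ j)"
      using assms unfolding mat_tendsto_def abs_tendsto_def mclose_def
      by (intro order_tendstoD(2)) auto
    then show ?thesis
    proof eventually_elim
      case (elim n)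
      then show ?case
        using absF_diff_triangle[of "s n $ i $ j" "M $ i $ j" "L $ i $ j"] by linarith
    qed
  qed
  then show ?thesis
    unfolding mclose_def by (simp add: eventually_all_finite)
qed

definition seq_closed :: "'a mat2 set \<Rightarrow> bool" where
  "seq_closed C \<longleftrightarrow> (\<forall>s L. (\<forall>n. s n \<in> C) \<longrightarrow> mat_tendsto s L \<longrightarrow> L \<in> C)"

lemma seq_closed_O1bar: "seq_closed O1bar"
  unfolding seq_closed_def
proof (intro allI impI)
  fix s L
  assume "\<forall>n. s n \<in> O1bar" "mat_tendsto s L"
  then have "abs_tendsto (\<lambda>n. 0) (det L)"
    using mat_tendsto_det[of s L] by (simp add: O1bar_def)
  then show "L \<in> O1bar"
    using abs_tendsto_unique[OF _ abs_tendsto_const] by (simp add: O1bar_def)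
qed

lemma seq_closed_not_mclose: "seq_closed {M. \<not> mclose absF e M M0}"
  unfolding seq_closed_def
proof (intro allI impI)
  fix s L
  assume s: "\<forall>n. s n \<in> {M. \<not> mclose absF e M M0}" and L: "mat_tendsto s L"
  show "L \<in> {M. \<not> mclose absF e M M0}"
  proof (rule CollectI, rule notI)
    assume "mclose absF e L M0"
    then obtain N where "\<forall>n\<ge>N. mclose absF e (s n) M0"
      using mat_tendsto_eventually_mclose[OF L] unfolding eventually_sequentially by blast
    then have "mclose absF e (s N) M0" by simp
    then show False using s by simp
  qed
qed

lemma seq_compact_in_iff:
  "seq_compact_in absF K \<longleftrightarrow>
     (\<forall>s. (\<forall>n. s n \<in> K) \<longrightarrow>
        (\<exists>r::nat \<Rightarrow> nat. \<exists>L. strict_mono r \<and> L \<in> K \<and> mat_tendsto (s \<circ> r) L))"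
  by (simp add: seq_compact_in_def mat_tendsto_def abs_tendsto_def o_def)

lemma seq_compact_in_infinite_visits:
  fixes s :: "nat \<Rightarrow> 'a mat2"
  assumes "seq_compact_in absF K" "infinite {n. s n \<in> K}"
  shows "\<exists>r::nat \<Rightarrow> nat. \<exists>L. strict_mono r \<and> L \<in> K \<and> mat_tendsto (s \<circ> r) L"
proof -
  obtain r :: "nat \<Rightarrow> nat" where r: "strict_mono r" "\<And>n. s (r n) \<in> K"
    using infinite_enumerate[OF assms(2)] by auto
  obtain r' :: "nat \<Rightarrow> nat" and L where "strict_mono r'" "L \<in> K" "mat_tendsto ((s \<circ> r) \<circ> r') L"
    using assms(1) r(2) unfolding seq_compact_in_iff by (metis comp_apply)
  then show ?thesis
    using r(1) by (metis o_assoc strict_mono_o)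
qed

lemma seq_compact_in_Un:
  assumes "seq_compact_in absF K1" "seq_compact_in absF K2"
  shows "seq_compact_in absF (K1 \<union> K2)"
  unfolding seq_compact_in_iff
proof (intro allI impI)
  fix s :: "nat \<Rightarrow> 'a mat2"
  assume "\<forall>n. s n \<in> K1 \<union> K2"
  then have "{n. s n \<in> K1} \<union> {n. s n \<in> K2} = UNIV" by auto
  then have "infinite {n. s n \<in> K1} \<or> infinite {n. s n \<in> K2}"
    by (metis finite_UnI infinite_UNIV_nat)
  then show "\<exists>r::nat \<Rightarrow> nat. \<exists>L. strict_mono r \<and> L \<in> K1 \<union> K2 \<and> mat_tendsto (s \<circ> r) L"
    using seq_compact_in_infinite_visits[OF assms(1)] seq_compact_in_infinite_visits[OF assms(2)]
    by blast
qed

lemma seq_compact_in_Int_seq_closed: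
  assumes "seq_compact_in absF K" "seq_closed C"
  shows "seq_compact_in absF (K \<inter> C)"
  unfolding seq_compact_in_iff
proof (intro allI impI)
  fix s :: "nat \<Rightarrow> 'a mat2"
  assume s: "\<forall>n. s n \<in> K \<inter> C"
  then obtain r :: "nat \<Rightarrow> nat" and L where r: "strict_mono r" "L \<in> K" "mat_tendsto (s \<circ> r) L"
    using assms(1) unfolding seq_compact_in_iff by blast
  have "\<forall>n. (s \<circ> r) n \<in> C"
    using s by simp
  then have "L \<in> C"
    using assms(2) r(3) unfolding seq_closed_def by blast
  then show "\<exists>r::nat \<Rightarrow> nat. \<exists>L. strict_mono r \<and> L \<in> K \<inter> C \<and> mat_tendsto (s \<circ> r) L"
    using r by blast
qed

lemma seq_compact_in_preimage_GL2:
  assumes g: "g \<in> GL2" and K: "seq_compact_in absF K"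
  shows "seq_compact_in absF {M. g ** M \<in> K}"
  unfolding seq_compact_in_iff
proof (intro allI impI)
  fix s :: "nat \<Rightarrow> 'a mat2"
  assume "\<forall>n. s n \<in> {M. g ** M \<in> K}"
  then obtain r :: "nat \<Rightarrow> nat" and L
    where r: "strict_mono r" "L \<in> K" "mat_tendsto ((\<lambda>n. g ** s n) \<circ> r) L"
    using K unfolding seq_compact_in_iff by (metis mem_Collect_eq)
  obtain B where B: "B ** g = mat 1" "g ** B = mat 1"
    using g by (rule GL2_inverse)
  have "mat_tendsto (s \<circ> r) (B ** L)"
    using mat_tendsto_mult_left[OF r(3), of B] by (simp add: o_def matrix_mul_assoc B)
  moreover have "B ** L \<in> {M. g ** M \<in> K}"
    using r(2) by (simp add: matrix_mul_assoc B)
  ultimately show "\<exists>r::nat \<Rightarrow> nat. \<exists>L. strict_mono r \<and> L \<in> {M. g ** M \<in> K} \<and> mat_tendsto (s \<circ> r) L"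
    using r(1) by blast
qed

lemma seq_compact_in_avoids_zero:
  assumes "seq_compact_in absF K" "0 \<notin> K"
  shows "\<exists>e>0. \<forall>M\<in>K. \<not> mclose absF e M 0"
proof (rule ccontr)
  assume "\<not> ?thesis"
  then have "\<forall>n. \<exists>M\<in>K. mclose absF (inverse (real (Suc n))) M 0" by auto
  then obtain s where s: "\<And>n. s n \<in> K" "\<And>n. mclose absF (inverse (real (Suc n))) (s n) 0"
    by metis
  then obtain r :: "nat \<Rightarrow> nat" and L where r: "strict_mono r" "L \<in> K" "mat_tendsto (s \<circ> r) L"
    using assms(1) unfolding seq_compact_in_iff by blast
  have bound: "absF ((s \<circ> r) n $ i $ j - 0 $ i $ j) \<le> inverse (real (Suc n))" for n i j
  proof -
    have "absF (s (r n) $ i $ j) < inverse (real (Suc (r n)))"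
      using s(2)[of "r n"] unfolding mclose_def by simp
    also have "\<dots> \<le> inverse (real (Suc n))"
      using seq_suble[OF r(1), of n] by (simp add: le_imp_inverse_le)
    finally show ?thesis by simp
  qed
  have "mat_tendsto (s \<circ> r) 0"
    unfolding mat_tendsto_def using abs_tendsto_by_bound[OF bound LIMSEQ_inverse_real_of_nat] by blast
  then show False
    using mat_tendsto_unique[OF r(3)] r(2) assms(2) by blast
qed

end

locale nonarch_local_field_abs =
  fixes absF :: "'a::field \<Rightarrow> real"
  assumes local_field: "nonarch_local_field absF"

sublocale nonarch_local_field_abs \<subseteq> nonarch_valued_field
  using local_field by unfold_locales (simp add: nonarch_local_field_def)

context nonarch_local_field_abs
begin

definition int_mats :: "'a mat2 set" where
  "int_mats = {M. \<forall>i j. absF (M $ i $ j) \<le> 1}"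

lemma integral_seq_has_convergent_subseq:
  fixes s :: "nat \<Rightarrow> 'i \<Rightarrow> 'a"
  assumes "finite I" "\<And>n i. i \<in> I \<Longrightarrow> absF (s n i) \<le> 1"
  shows "\<exists>(r::nat \<Rightarrow> nat) l. strict_mono r \<and>
           (\<forall>i\<in>I. absF (l i) \<le> 1 \<and> abs_tendsto (\<lambda>n. s (r n) i) (l i))"
  using assms
proof (induction I rule: finite_induct)
  case empty
  show ?case by (auto intro: strict_mono_id)
next
  case (insert x F)
  then obtain r :: "nat \<Rightarrow> nat" and l
    where r: "strict_mono r" "\<forall>i\<in>F. absF (l i) \<le> 1 \<and> abs_tendsto (\<lambda>n. s (r n) i) (l i)"
    by blast
  obtain r' :: "nat \<Rightarrow> nat" and lx
    where r': "strict_mono r'" "absF lx \<le> 1" "abs_tendsto (\<lambda>n. s (r (r' n)) x) lx"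
    using local_field insert.prems[of x]
    unfolding nonarch_local_field_def abs_tendsto_def by force
  have "abs_tendsto (\<lambda>n. s (r (r' n)) i) (l i)" if "i \<in> F" for i
    using r(2) LIMSEQ_subseq_LIMSEQ[OF _ r'(1)] that unfolding abs_tendsto_def by (fastforce simp: o_def)
  moreover have "strict_mono (\<lambda>n. r (r' n))"
    using strict_mono_o[OF r(1) r'(1)] by (simp add: comp_def)
  ultimately show ?case
    using r(2) r'(2,3) insert.hyps(2)
    by (intro exI[of _ "\<lambda>n. r (r' n)"] exI[of _ "l(x := lx)"]) auto
qed

lemma seq_compact_in_int_mats: "seq_compact_in absF int_mats"
  unfolding seq_compact_in_iff
proof (intro allI impI)
  fix s :: "nat \<Rightarrow> 'a mat2"
  assume "\<forall>n. s n \<in> int_mats"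
  then obtain r :: "nat \<Rightarrow> nat" and l
    where r: "strict_mono r" "\<forall>p. absF (l p) \<le> 1 \<and> abs_tendsto (\<lambda>n. s (r n) $ fst p $ snd p) (l p)"
    using integral_seq_has_convergent_subseq[of UNIV "\<lambda>n p. s n $ fst p $ snd p"]
    unfolding int_mats_def by auto
  then have "(\<chi> i j. l (i, j)) \<in> int_mats" "mat_tendsto (s \<circ> r) (\<chi> i j. l (i, j))"
    unfolding int_mats_def mat_tendsto_def by auto
  then show "\<exists>r::nat \<Rightarrow> nat. \<exists>L. strict_mono r \<and> L \<in> int_mats \<and> mat_tendsto (s \<circ> r) L"
    using r(1) by blast
qed

end

section \<open>Test functions\<close>

context nonarch_valued_field
begin

definition locally_const :: "'a mat2 set \<Rightarrow> ('a mat2 \<Rightarrow> 'b) \<Rightarrow> bool" where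
  "locally_const X f \<longleftrightarrow> (\<forall>M\<in>X. \<exists>e>0. \<forall>N\<in>X. mclose absF e N M \<longrightarrow> f N = f M)"

lemma SX_iff:
  "f \<in> SX absF X \<longleftrightarrow>
     (\<forall>M. M \<notin> X \<longrightarrow> f M = 0) \<and> locally_const X f \<and>
     (\<exists>K\<subseteq>X. seq_compact_in absF K \<and> {M. f M \<noteq> 0} \<subseteq> K)"
  by (simp add: SX_def locally_const_def)

lemma locally_const_combine:
  assumes "locally_const X f" "locally_const X h"
  shows "locally_const X (\<lambda>M. F (f M) (h M))"
  unfolding locally_const_def
proof
  fix M assume "M \<in> X"
  then obtain e1 e2 where e: "e1 > 0" "\<forall>N\<in>X. mclose absF e1 N M \<longrightarrow> f N = f M"
    "e2 > 0" "\<forall>N\<in>X. mclose absF e2 N M \<longrightarrow> h N = h M"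
    using assms unfolding locally_const_def by meson
  show "\<exists>e>0. \<forall>N\<in>X. mclose absF e N M \<longrightarrow> F (f N) (h N) = F (f M) (h M)"
  proof (intro exI[of _ "min e1 e2"] conjI ballI impI)
    show "0 < min e1 e2" using e by simp
    fix N assume "N \<in> X" "mclose absF (min e1 e2) N M"
    then show "F (f N) (h N) = F (f M) (h M)" using e by simp
  qed
qed

lemma SX_linear:
  assumes f: "f \<in> SX absF X" and h: "h \<in> SX absF X"
  shows "(\<lambda>M. c * f M + a * h M) \<in> SX absF X"
proof -
  obtain K1 K2 where "K1 \<subseteq> X" "seq_compact_in absF K1" "{M. f M \<noteq> 0} \<subseteq> K1"
    and "K2 \<subseteq> X" "seq_compact_in absF K2" "{M. h M \<noteq> 0} \<subseteq> K2"
    using f h unfolding SX_iff by meson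
  moreover have "{M. c * f M + a * h M \<noteq> 0} \<subseteq> {M. f M \<noteq> 0} \<union> {M. h M \<noteq> 0}"
    by auto
  ultimately have "K1 \<union> K2 \<subseteq> X" "seq_compact_in absF (K1 \<union> K2)"
    "{M. c * f M + a * h M \<noteq> 0} \<subseteq> K1 \<union> K2"
    using seq_compact_in_Un by blast+
  moreover have "locally_const X (\<lambda>M. c * f M + a * h M)"
    using f h locally_const_combine[of X f h "\<lambda>x y. c * x + a * y"] unfolding SX_iff by blast
  ultimately show ?thesis
    using f h unfolding SX_iff by blast
qed

lemma mclose_mult_left:
  assumes "e > 0"
  obtains d where "d > 0" "\<And>N M. mclose absF d N M \<Longrightarrow> mclose absF e (g ** N) (g ** M)"
proof -
  define C where "C = 1 + (\<Sum>i\<in>UNIV. \<Sum>k\<in>UNIV. absF (g $ i $ k))"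
  have C: "C \<ge> 1" "(\<Sum>k\<in>UNIV. absF (g $ i $ k)) \<le> C - 1" for i
    unfolding C_def by (auto simp: sum_nonneg intro!: member_le_sum)
  have close: "mclose absF e (g ** N) (g ** M)" if "mclose absF (e / C) N M" for N M
    unfolding mclose_def
  proof (intro allI)
    fix i j
    have "absF ((g ** N) $ i $ j - (g ** M) $ i $ j)
        \<le> (\<Sum>k\<in>UNIV. absF (g $ i $ k) * absF (N $ k $ j - M $ k $ j))"
      by (rule absF_mat_mult_diff_le)
    also have "\<dots> \<le> (\<Sum>k\<in>UNIV. absF (g $ i $ k) * (e / C))"
      using that unfolding mclose_def by (intro sum_mono mult_left_mono) (auto intro: less_imp_le)
    also have "\<dots> = (\<Sum>k\<in>UNIV. absF (g $ i $ k)) * (e / C)"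
      by (rule sum_distrib_right[symmetric])
    also have "\<dots> \<le> (C - 1) * (e / C)"
      using C assms by (intro mult_right_mono) auto
    also have "\<dots> < e"
      using assms C(1) by (simp add: field_simps)
    finally show "absF ((g ** N) $ i $ j - (g ** M) $ i $ j) < e" .
  qed
  show thesis
    using assms C(1) close by (intro that[of "e / C"]) auto
qed

lemma SX_comp_GL2:
  assumes f: "f \<in> SX absF X" and X: "GL2_stable X" and g: "g \<in> GL2"
  shows "(\<lambda>M. f (g ** M)) \<in> SX absF X"
proof -
  have gX: "\<And>M. g ** M \<in> X \<longleftrightarrow> M \<in> X"
    using X g unfolding GL2_stable_def by blast
  obtain K where K: "K \<subseteq> X" "seq_compact_in absF K" "{M. f M \<noteq> 0} \<subseteq> K"
    using f unfolding SX_iff by blast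
  have "locally_const X (\<lambda>M. f (g ** M))"
    unfolding locally_const_def
  proof
    fix M assume "M \<in> X"
    then obtain e where "e > 0" "\<forall>N\<in>X. mclose absF e N (g ** M) \<longrightarrow> f N = f (g ** M)"
      using f gX unfolding SX_iff locally_const_def by blast
    moreover obtain d where "d > 0" "\<And>N M. mclose absF d N M \<Longrightarrow> mclose absF e (g ** N) (g ** M)"
      using mclose_mult_left[OF \<open>e > 0\<close>] by blast
    ultimately show "\<exists>d>0. \<forall>N\<in>X. mclose absF d N M \<longrightarrow> f (g ** N) = f (g ** M)"
      using gX by blast
  qed
  moreover have "{M. g ** M \<in> K} \<subseteq> X" "seq_compact_in absF {M. g ** M \<in> K}"
    "{M. f (g ** M) \<noteq> 0} \<subseteq> {M. g ** M \<in> K}"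
    using K gX seq_compact_in_preimage_GL2[OF g K(2)] by auto
  ultimately show ?thesis
    using f gX unfolding SX_iff by blast
qed

lemma SX_O1_vanishes_at_0: "f \<in> SX absF O1 \<Longrightarrow> f 0 = 0"
  using zero_notin_O1 unfolding SX_def by blast

lemma mclose_nonzero:
  assumes "M \<noteq> 0"
  shows "\<exists>d>0. \<forall>N. mclose absF d N M \<longrightarrow> N \<noteq> 0"
proof -
  obtain i j where "M $ i $ j \<noteq> 0"
    using assms by (metis vec_eq_iff zero_index)
  then have "absF (M $ i $ j) > 0"
    by (rule absF_pos)
  moreover have "N \<noteq> 0" if "mclose absF (absF (M $ i $ j)) N M" for N
    using that[unfolded mclose_def, rule_format, of i j] by auto
  ultimately show ?thesis
    by blast
qed

text \<open>Extension by zero: a function with compact support in \<open>O1\<close> is constant near \<open>0\<close>,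
  because its support keeps a positive distance from \<open>0\<close>.\<close>
lemma SX_O1_subset_SX_O1bar: "SX absF O1 \<subseteq> SX absF O1bar"
proof
  fix f assume f: "f \<in> SX absF O1"
  obtain K where K: "K \<subseteq> O1" "seq_compact_in absF K" "{M. f M \<noteq> 0} \<subseteq> K"
    using f unfolding SX_iff by blast
  have "locally_const O1bar f"
    unfolding locally_const_def
  proof
    fix M :: "'a mat2"
    assume M: "M \<in> O1bar"
    show "\<exists>e>0. \<forall>N\<in>O1bar. mclose absF e N M \<longrightarrow> f N = f M"
    proof (cases "M = 0")
      case True
      obtain e where e: "e > 0" "\<forall>N\<in>K. \<not> mclose absF e N 0"
        using seq_compact_in_avoids_zero[OF K(2)] K(1) zero_notin_O1 by blast
      have "N \<notin> K" if "mclose absF e N M" for N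
        using e(2) that True by blast
      then show ?thesis
        using e(1) K(3) True SX_O1_vanishes_at_0[OF f] by auto
    next
      case False
      then obtain d where d: "d > 0" "\<forall>N. mclose absF d N M \<longrightarrow> N \<noteq> 0"
        using mclose_nonzero by blast
      obtain e where e: "e > 0" "\<forall>N\<in>O1. mclose absF e N M \<longrightarrow> f N = f M"
        using f M False unfolding SX_iff locally_const_def O1_def O1bar_def by auto
      have "\<forall>N\<in>O1bar. mclose absF (min d e) N M \<longrightarrow> f N = f M"
        using d(2) e(2) unfolding O1_def O1bar_def by auto
      moreover have "min d e > 0"
        using d(1) e(1) by simp
      ultimately show ?thesis
        by blast
    qed
  qed
  then show "f \<in> SX absF O1bar"
    using f K O1_subset_O1bar unfolding SX_iff by blast
qed

end

section \<open>Distributions and the action of GL2\<close>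

lemma act1_linear:
  "act1 absF X g (\<lambda>f. a * \<xi> f + b * \<eta> f) = (\<lambda>f. a * act1 absF X g \<xi> f + b * act1 absF X g \<eta> f)"
  by (simp add: act1_def fun_eq_iff algebra_simps)

lemma act1_diff:
  "act1 absF X g (\<lambda>f. \<xi> f - \<eta> f) = (\<lambda>f. act1 absF X g \<xi> f - act1 absF X g \<eta> f)"
  by (simp add: act1_def fun_eq_iff algebra_simps)

lemma iter_diff_linear:
  "iter_diff absF X gs (\<lambda>f. a * \<xi> f + b * \<eta> f)
     = (\<lambda>f. a * iter_diff absF X gs \<xi> f + b * iter_diff absF X gs \<eta> f)"
  by (induction gs) (simp_all add: act1_linear algebra_simps)

lemma iter_diff_diff:
  "iter_diff absF X gs (\<lambda>f. \<xi> f - \<eta> f) = (\<lambda>f. iter_diff absF X gs \<xi> f - iter_diff absF X gs \<eta> f)"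
  by (induction gs) (simp_all add: act1_diff algebra_simps)

lemma iter_diff_zero: "iter_diff absF X gs (\<lambda>f. 0) = (\<lambda>f. 0)"
  by (induction gs) (simp_all add: act1_def fun_eq_iff)

lemma iter_diff_append: "iter_diff absF X (gs @ hs) \<xi> = iter_diff absF X gs (iter_diff absF X hs \<xi>)"
  by (induction gs) simp_all

lemma SdualX_linearD:
  "\<xi> \<in> SdualX absF X \<Longrightarrow> f \<in> SX absF X \<Longrightarrow> h \<in> SX absF X \<Longrightarrow>
     \<xi> (\<lambda>M. c * f M + a * h M) = c * \<xi> f + a * \<xi> h"
  by (simp add: SdualX_def)

lemma SdualX_outside: "\<xi> \<in> SdualX absF X \<Longrightarrow> f \<notin> SX absF X \<Longrightarrow> \<xi> f = 0"
  by (simp add: SdualX_def)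

lemma SdualX_linear:
  "\<xi> \<in> SdualX absF X \<Longrightarrow> \<eta> \<in> SdualX absF X \<Longrightarrow> (\<lambda>f. a * \<xi> f + b * \<eta> f) \<in> SdualX absF X"
  by (simp add: SdualX_def algebra_simps)

lemma SdualX_diff:
  "\<xi> \<in> SdualX absF X \<Longrightarrow> \<eta> \<in> SdualX absF X \<Longrightarrow> (\<lambda>f. \<xi> f - \<eta> f) \<in> SdualX absF X"
  by (simp add: SdualX_def algebra_simps)

context nonarch_valued_field
begin

lemma act1_act1:
  assumes X: "GL2_stable X" and g: "g \<in> GL2" and h: "h \<in> GL2"
  shows "act1 absF X g (act1 absF X h \<xi>) = act1 absF X (g ** h) \<xi>"
proof
  fix f
  have "(\<lambda>M. f (g ** M)) \<in> SX absF X" if "f \<in> SX absF X"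
    using SX_comp_GL2[OF that X g] .
  then show "act1 absF X g (act1 absF X h \<xi>) f = act1 absF X (g ** h) \<xi> f"
    by (simp add: act1_def det_mul absF_mult matrix_mul_assoc)
qed

lemma act1_commute:
  assumes "GL2_stable X" "g \<in> GL2" "h \<in> GL2" "g ** h = h ** g"
  shows "act1 absF X g (act1 absF X h \<xi>) = act1 absF X h (act1 absF X g \<xi>)"
  using assms by (simp add: act1_act1)

lemma iter_diff_commute_single:
  assumes X: "GL2_stable X" and g: "g \<in> GL2" and hs: "set hs \<subseteq> GL2"
    and comm: "\<forall>h\<in>set hs. g ** h = h ** g"
  shows "iter_diff absF X [g] (iter_diff absF X hs \<xi>) = iter_diff absF X hs (iter_diff absF X [g] \<xi>)"
  using hs comm
proof (induction hs arbitrary: \<xi>)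
  case (Cons h hs)
  then have h: "h \<in> GL2" "g ** h = h ** g" by auto
  have "iter_diff absF X [g] (iter_diff absF X (h # hs) \<xi>)
      = iter_diff absF X [h] (iter_diff absF X [g] (iter_diff absF X hs \<xi>))"
    using act1_commute[OF X g h] by (simp add: act1_diff algebra_simps)
  also have "\<dots> = iter_diff absF X (h # hs) (iter_diff absF X [g] \<xi>)"
    using Cons.IH Cons.prems by simp
  finally show ?case .
qed simp

lemma iter_diff_commute:
  assumes X: "GL2_stable X" and gs: "set gs \<subseteq> GL2" and hs: "set hs \<subseteq> GL2"
    and comm: "\<forall>g\<in>set gs. \<forall>h\<in>set hs. g ** h = h ** g"
  shows "iter_diff absF X gs (iter_diff absF X hs \<xi>) = iter_diff absF X hs (iter_diff absF X gs \<xi>)"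
  using gs comm
proof (induction gs arbitrary: \<xi>)
  case (Cons g gs)
  have IH: "iter_diff absF X gs (iter_diff absF X hs \<eta>) = iter_diff absF X hs (iter_diff absF X gs \<eta>)"
    for \<eta>
    using Cons by auto
  have "iter_diff absF X (g # gs) (iter_diff absF X hs \<xi>)
      = iter_diff absF X [g] (iter_diff absF X hs (iter_diff absF X gs \<xi>))"
    by (simp add: IH)
  also have "\<dots> = iter_diff absF X hs (iter_diff absF X [g] (iter_diff absF X gs \<xi>))"
    using Cons.prems by (intro iter_diff_commute_single X hs) auto
  also have "\<dots> = iter_diff absF X hs (iter_diff absF X (g # gs) \<xi>)"
    by simp
  finally show ?case .
qed simp

lemma act1_SdualX:
  assumes \<xi>: "\<xi> \<in> SdualX absF X" and X: "GL2_stable X" and g: "g \<in> GL2"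
  shows "act1 absF X g \<xi> \<in> SdualX absF X"
  unfolding SdualX_def
proof (intro CollectI conjI ballI allI impI)
  fix f assume "f \<notin> SX absF X"
  then show "act1 absF X g \<xi> f = 0" by (simp add: act1_def)
next
  fix f h c a assume f: "f \<in> SX absF X" and h: "h \<in> SX absF X"
  have "\<xi> (\<lambda>M. c * f (g ** M) + a * h (g ** M)) = c * \<xi> (\<lambda>M. f (g ** M)) + a * \<xi> (\<lambda>M. h (g ** M))"
    using SdualX_linearD[OF \<xi> SX_comp_GL2[OF f X g] SX_comp_GL2[OF h X g]] .
  then show "act1 absF X g \<xi> (\<lambda>M. c * f M + a * h M) = c * act1 absF X g \<xi> f + a * act1 absF X g \<xi> h"
    using f h SX_linear[OF f h, of c a] by (simp add: act1_def ring_distribs mult.left_commute)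
qed

lemma iter_diff_SdualX:
  assumes "\<xi> \<in> SdualX absF X" "GL2_stable X" "set gs \<subseteq> GL2"
  shows "iter_diff absF X gs \<xi> \<in> SdualX absF X"
  using assms(3)
proof (induction gs)
  case (Cons g gs)
  then have "act1 absF X g (iter_diff absF X gs \<xi>) \<in> SdualX absF X"
    using act1_SdualX assms(2) by simp
  then show ?case
    using SdualX_diff Cons by simp
qed (use assms(1) in simp)

lemma restr1_SdualX:
  assumes \<xi>: "\<xi> \<in> SdualX absF O1bar"
  shows "restr1 absF \<xi> \<in> SdualX absF O1"
  unfolding SdualX_def
proof (intro CollectI conjI ballI allI impI)
  fix f assume "f \<notin> SX absF O1"
  then show "restr1 absF \<xi> f = 0" by (simp add: restr1_def)
next
  fix f h c a assume f: "f \<in> SX absF O1" and h: "h \<in> SX absF O1"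
  then have "f \<in> SX absF O1bar" "h \<in> SX absF O1bar"
    using SX_O1_subset_SX_O1bar by blast+
  then show "restr1 absF \<xi> (\<lambda>M. c * f M + a * h M) = c * restr1 absF \<xi> f + a * restr1 absF \<xi> h"
    using SdualX_linearD[OF \<xi>] SX_linear[OF f h, of c a] f h by (simp add: restr1_def)
qed

lemma restr1_act1:
  assumes g: "g \<in> GL2"
  shows "restr1 absF (act1 absF O1bar g \<xi>) = act1 absF O1 g (restr1 absF \<xi>)"
proof
  fix f
  have "f \<in> SX absF O1bar \<and> (\<lambda>M. f (g ** M)) \<in> SX absF O1" if "f \<in> SX absF O1"
    using that SX_O1_subset_SX_O1bar SX_comp_GL2[OF that GL2_stable_O1 g] by blast
  then show "restr1 absF (act1 absF O1bar g \<xi>) f = act1 absF O1 g (restr1 absF \<xi>) f"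
    by (simp add: restr1_def act1_def)
qed

lemma restr1_iter_diff:
  "set gs \<subseteq> GL2 \<Longrightarrow> restr1 absF (iter_diff absF O1bar gs \<xi>) = iter_diff absF O1 gs (restr1 absF \<xi>)"
proof (induction gs)
  case (Cons g gs)
  then have IH: "restr1 absF (iter_diff absF O1bar gs \<xi>) = iter_diff absF O1 gs (restr1 absF \<xi>)"
    and g: "g \<in> GL2" by auto
  have "restr1 absF (iter_diff absF O1bar (g # gs) \<xi>)
      = (\<lambda>f. restr1 absF (act1 absF O1bar g (iter_diff absF O1bar gs \<xi>)) f
             - restr1 absF (iter_diff absF O1bar gs \<xi>) f)"
    by (simp add: restr1_def fun_eq_iff)
  also have "\<dots> = iter_diff absF O1 (g # gs) (restr1 absF \<xi>)"
    by (simp add: restr1_act1[OF g] IH)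
  finally show ?case .
qed simp

definition delta0 :: "('a mat2 \<Rightarrow> complex) \<Rightarrow> complex" where
  "delta0 f = (if f \<in> SX absF O1bar then f 0 else 0)"

lemma delta0_SdualX: "delta0 \<in> SdualX absF O1bar"
  by (simp add: SdualX_def delta0_def SX_linear)

lemma restr1_delta0: "restr1 absF delta0 = (\<lambda>f. 0)"
  by (auto simp: restr1_def delta0_def fun_eq_iff SX_O1_vanishes_at_0)

lemma act1_delta0:
  assumes g: "g \<in> GL2"
  shows "act1 absF O1bar g (\<lambda>f. c * delta0 f) = (\<lambda>f. c * of_real (absF (det g)) * delta0 f)"
  using SX_comp_GL2[OF _ GL2_stable_O1bar g] by (auto simp: act1_def delta0_def fun_eq_iff)

definition delta0_eigen :: "'a mat2 list \<Rightarrow> complex" where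
  "delta0_eigen gs = (\<Prod>g\<leftarrow>gs. of_real (absF (det g)) - 1)"

lemma iter_diff_delta0:
  assumes "set gs \<subseteq> GL2"
  shows "iter_diff absF O1bar gs (\<lambda>f. c * delta0 f) = (\<lambda>f. c * delta0_eigen gs * delta0 f)"
  using assms
proof (induction gs arbitrary: c)
  case (Cons g gs)
  let ?p = "delta0_eigen gs"
  have "iter_diff absF O1bar (g # gs) (\<lambda>f. c * delta0 f)
      = (\<lambda>f. act1 absF O1bar g (\<lambda>f. c * ?p * delta0 f) f - c * ?p * delta0 f)"
    using Cons.IH[of c] Cons.prems by simp
  also have "\<dots> = (\<lambda>f. c * ((of_real (absF (det g)) - 1) * ?p) * delta0 f)"
    using act1_delta0[of g "c * ?p"] Cons.prems by (simp add: fun_eq_iff algebra_simps)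
  finally show ?case
    by (simp add: delta0_eigen_def)
qed (simp add: delta0_eigen_def)

lemma delta0_eigen_replicate_nonzero: "absF (det z) \<noteq> 1 \<Longrightarrow> delta0_eigen (replicate n z) \<noteq> 0"
  by (simp add: delta0_eigen_def prod_list_replicate)

definition annihilated :: "'a mat2 set \<Rightarrow> nat \<Rightarrow> (('a mat2 \<Rightarrow> complex) \<Rightarrow> complex) \<Rightarrow> bool" where
  "annihilated X k \<xi> \<longleftrightarrow>
     (\<forall>gs. length gs = Suc k \<and> set gs \<subseteq> GL2 \<longrightarrow> iter_diff absF X gs \<xi> = (\<lambda>f. 0))"

lemma Sinv_eq: "Sinv absF X = {\<xi> \<in> SdualX absF X. annihilated X 0 \<xi>}"
proof -
  have "annihilated X 0 \<xi> \<longleftrightarrow> (\<forall>g\<in>GL2. act1 absF X g \<xi> = \<xi>)" for \<xi>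
    unfolding annihilated_def length_Suc_conv by (auto simp: fun_eq_iff)
  then show ?thesis
    by (auto simp: Sinv_def)
qed

lemma Sgeninv_eq: "Sgeninv absF X = {\<xi> \<in> SdualX absF X. \<exists>k. annihilated X k \<xi>}"
  by (simp add: Sgeninv_def annihilated_def)

lemma annihilated_mono:
  assumes "annihilated X k \<xi>" "k \<le> K"
  shows "annihilated X K \<xi>"
  unfolding annihilated_def
proof (intro allI impI)
  fix gs :: "'a mat2 list"
  assume gs: "length gs = Suc K \<and> set gs \<subseteq> GL2"
  then have "iter_diff absF X (drop (K - k) gs) \<xi> = (\<lambda>f. 0)"
    using assms set_drop_subset[of "K - k" gs] unfolding annihilated_def by auto
  then show "iter_diff absF X gs \<xi> = (\<lambda>f. 0)"
    using iter_diff_append[of absF X "take (K - k) gs" "drop (K - k) gs" \<xi>] by (simp add: iter_diff_zero)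
qed

lemma annihilated_diff:
  "annihilated X k \<xi> \<Longrightarrow> annihilated X k \<eta> \<Longrightarrow> annihilated X k (\<lambda>f. \<xi> f - \<eta> f)"
  by (simp add: annihilated_def iter_diff_diff)

lemma restr1_annihilated: "annihilated O1bar k \<xi> \<Longrightarrow> annihilated O1 k (restr1 absF \<xi>)"
  by (simp add: annihilated_def flip: restr1_iter_diff) (simp add: restr1_def)

lemma exists_central_GL2:
  obtains z :: "'a mat2" where "z \<in> GL2" "absF (det z) \<noteq> 1" "\<And>g. z ** g = g ** z"
proof -
  obtain t where t: "absF t \<noteq> 0" "absF t \<noteq> 1"
    using absF_nontrivial by blast
  have det: "absF (det (mat t :: 'a mat2)) = absF t ^ 2"
    by (simp add: det_2 mat_def absF_mult power2_eq_square)
  have "absF t ^ 2 \<noteq> 1"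
  proof
    assume "absF t ^ 2 = 1"
    then have "absF t = 1 \<or> absF t = -1"
      by (simp add: power2_eq_1_iff)
    then show False
      using t(2) absF_nonneg[of t] by linarith
  qed
  then show thesis
    using t det mat_matrix_mult_commute[of t] by (intro that[of "mat t"]) (auto simp: GL2_def)
qed

end

section \<open>Extension across the origin\<close>

context nonarch_local_field_abs
begin

definition bump :: "'a mat2 \<Rightarrow> complex" where
  "bump M = (if M \<in> O1bar \<inter> int_mats then 1 else 0)"

lemma bump_0 [simp]: "bump 0 = 1"
  using zero_in_O1bar by (simp add: bump_def int_mats_def)

lemma bump_SX: "bump \<in> SX absF O1bar"
  unfolding SX_iff
proof (intro conjI)
  have int_mats_cong: "N \<in> int_mats \<longleftrightarrow> M \<in> int_mats" if "mclose absF 1 N M" for M N :: "'a mat2"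
  proof -
    have "absF (N $ i $ j) \<le> 1 \<longleftrightarrow> absF (M $ i $ j) \<le> 1" for i j
      using that absF_le_1_cong unfolding mclose_def by blast
    then show ?thesis by (simp add: int_mats_def)
  qed
  show "locally_const O1bar bump"
    unfolding locally_const_def
  proof
    fix M :: "'a mat2"
    assume "M \<in> O1bar"
    then have "\<forall>N\<in>O1bar. mclose absF 1 N M \<longrightarrow> bump N = bump M"
      using int_mats_cong by (simp add: bump_def)
    then show "\<exists>e>0. \<forall>N\<in>O1bar. mclose absF e N M \<longrightarrow> bump N = bump M"
      using zero_less_one by blast
  qed
  have "seq_compact_in absF (int_mats \<inter> O1bar)"
    by (rule seq_compact_in_Int_seq_closed[OF seq_compact_in_int_mats seq_closed_O1bar])
  moreover have "{M. bump M \<noteq> 0} \<subseteq> int_mats \<inter> O1bar"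
    by (auto simp: bump_def)
  ultimately show "\<exists>K\<subseteq>O1bar. seq_compact_in absF K \<and> {M. bump M \<noteq> 0} \<subseteq> K"
    by blast
qed (simp add: bump_def)

lemma SX_sub_bump:
  assumes f: "f \<in> SX absF O1bar"
  shows "(\<lambda>M. f M - f 0 * bump M) \<in> SX absF O1"
proof -
  let ?h = "\<lambda>M. f M - f 0 * bump M"
  have h: "?h \<in> SX absF O1bar"
    using SX_linear[OF f bump_SX, of 1 "- f 0"] by simp
  obtain K where K: "K \<subseteq> O1bar" "seq_compact_in absF K" "{M. ?h M \<noteq> 0} \<subseteq> K"
    using h unfolding SX_iff by blast
  obtain e where e: "e > 0" "\<forall>N\<in>O1bar. mclose absF e N 0 \<longrightarrow> ?h N = ?h 0"
    using h zero_in_O1bar unfolding SX_iff locally_const_def by blast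
  define K' where "K' = K \<inter> {M. \<not> mclose absF e M 0}"
  have "K' \<subseteq> O1"
    using K(1) e(1) unfolding K'_def O1_def O1bar_def mclose_def by auto
  moreover have "seq_compact_in absF K'"
    unfolding K'_def by (intro seq_compact_in_Int_seq_closed K(2) seq_closed_not_mclose)
  moreover have "{M. ?h M \<noteq> 0} \<subseteq> K'"
    using K e unfolding K'_def by auto
  moreover have "locally_const O1 ?h"
    using h O1_subset_O1bar unfolding SX_iff locally_const_def by (meson subsetD)
  moreover have "\<forall>M. M \<notin> O1 \<longrightarrow> ?h M = 0"
    using h unfolding SX_iff O1_def O1bar_def by auto
  ultimately show ?thesis
    unfolding SX_iff by blast
qed

lemma SdualX_restr1_zero:
  assumes \<eta>: "\<eta> \<in> SdualX absF O1bar" and "restr1 absF \<eta> = (\<lambda>f. 0)"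
  shows "\<eta> = (\<lambda>f. \<eta> bump * delta0 f)"
proof
  fix f
  show "\<eta> f = \<eta> bump * delta0 f"
  proof (cases "f \<in> SX absF O1bar")
    case True
    then have sub: "(\<lambda>M. f M - f 0 * bump M) \<in> SX absF O1"
      by (rule SX_sub_bump)
    then have "\<eta> (\<lambda>M. f M - f 0 * bump M) = 0"
      using assms(2) unfolding restr1_def by (metis)
    moreover have "\<eta> (\<lambda>M. 1 * (f M - f 0 * bump M) + f 0 * bump M)
        = 1 * \<eta> (\<lambda>M. f M - f 0 * bump M) + f 0 * \<eta> bump"
      using SdualX_linearD[OF \<eta> subsetD[OF SX_O1_subset_SX_O1bar sub] bump_SX] .
    ultimately show ?thesis
      using True by (simp add: delta0_def)
  qed (simp add: SdualX_outside[OF \<eta>] delta0_def)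
qed

lemma delta0_bump [simp]: "delta0 bump = 1"
  by (simp add: delta0_def bump_SX)

definition bump_extension :: "(('a mat2 \<Rightarrow> complex) \<Rightarrow> complex) \<Rightarrow> ('a mat2 \<Rightarrow> complex) \<Rightarrow> complex"
  where "bump_extension \<xi> f = (if f \<in> SX absF O1bar then \<xi> (\<lambda>M. f M - f 0 * bump M) else 0)"

lemma bump_extension_SdualX:
  assumes \<xi>: "\<xi> \<in> SdualX absF O1"
  shows "bump_extension \<xi> \<in> SdualX absF O1bar"
  unfolding SdualX_def
proof (intro CollectI conjI ballI allI impI)
  fix f assume "f \<notin> SX absF O1bar"
  then show "bump_extension \<xi> f = 0" by (simp add: bump_extension_def)
next
  fix f h c a assume f: "f \<in> SX absF O1bar" and h: "h \<in> SX absF O1bar"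
  have "(\<lambda>M. (c * f M + a * h M) - (c * f 0 + a * h 0) * bump M)
      = (\<lambda>M. c * (f M - f 0 * bump M) + a * (h M - h 0 * bump M))"
    by (simp add: fun_eq_iff algebra_simps)
  then show "bump_extension \<xi> (\<lambda>M. c * f M + a * h M) = c * bump_extension \<xi> f + a * bump_extension \<xi> h"
    using SdualX_linearD[OF \<xi> SX_sub_bump[OF f] SX_sub_bump[OF h]] SX_linear[OF f h, of c a] f h
    by (simp add: bump_extension_def)
qed

lemma restr1_bump_extension:
  assumes "\<xi> \<in> SdualX absF O1"
  shows "restr1 absF (bump_extension \<xi>) = \<xi>"
proof
  fix f
  show "restr1 absF (bump_extension \<xi>) f = \<xi> f"
    using SX_O1_subset_SX_O1bar SX_O1_vanishes_at_0[of f] SdualX_outside[OF assms, of f]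
    by (auto simp: restr1_def bump_extension_def)
qed

lemma annihilated_restr1_zero:
  assumes \<eta>: "\<eta> \<in> SdualX absF O1bar" and ann: "annihilated O1bar k \<eta>"
    and restr: "restr1 absF \<eta> = (\<lambda>f. 0)"
  shows "\<eta> = (\<lambda>f. 0)"
proof -
  obtain z where z: "z \<in> GL2" "absF (det z) \<noteq> 1"
    by (rule exists_central_GL2)
  define e where "e = replicate (Suc k) z"
  have e: "length e = Suc k \<and> set e \<subseteq> GL2"
    unfolding e_def set_replicate_Suc using z(1) by simp
  define c where "c = \<eta> bump"
  have \<eta>_eq: "\<eta> = (\<lambda>f. c * delta0 f)"
    unfolding c_def by (rule SdualX_restr1_zero[OF \<eta> restr])
  have "(\<lambda>f. 0) = iter_diff absF O1bar e \<eta>"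
    using ann e unfolding annihilated_def by (blast intro: sym)
  also have "\<dots> = (\<lambda>f. c * delta0_eigen e * delta0 f)"
    unfolding \<eta>_eq using e by (simp add: iter_diff_delta0)
  finally have "c * delta0_eigen e = 0"
    using fun_cong[of _ _ bump] by (metis delta0_bump mult_1_right)
  then have "c = 0"
    using delta0_eigen_replicate_nonzero[OF z(2)] by (simp add: e_def del: replicate_Suc)
  then show ?thesis
    using \<eta>_eq by simp
qed

lemma iter_diff_bump_extension:
  assumes \<xi>: "\<xi> \<in> SdualX absF O1" and ann: "annihilated O1 k \<xi>"
    and gs: "length gs = Suc k" "set gs \<subseteq> GL2"
  shows "iter_diff absF O1bar gs (bump_extension \<xi>)
           = (\<lambda>f. iter_diff absF O1bar gs (bump_extension \<xi>) bump * delta0 f)"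
proof (rule SdualX_restr1_zero)
  show "iter_diff absF O1bar gs (bump_extension \<xi>) \<in> SdualX absF O1bar"
    by (rule iter_diff_SdualX[OF bump_extension_SdualX[OF \<xi>] GL2_stable_O1bar gs(2)])
  show "restr1 absF (iter_diff absF O1bar gs (bump_extension \<xi>)) = (\<lambda>f. 0)"
    using ann gs by (simp add: restr1_iter_diff restr1_bump_extension[OF \<xi>] annihilated_def)
qed

text \<open>A central \<open>z\<close> commutes with every word, so the multiple of \<open>delta0\<close> produced by a
  word from the extension by \<open>bump\<close> is proportional to the eigenvalue of the word on
  \<open>delta0\<close>.\<close>
lemma bump_extension_coefficient:
  assumes \<xi>: "\<xi> \<in> SdualX absF O1" and ann: "annihilated O1 k \<xi>"
    and z: "z \<in> GL2" "\<And>g. z ** g = g ** z"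
    and gs: "length gs = Suc k" "set gs \<subseteq> GL2"
  defines "e \<equiv> replicate (Suc k) z"
  shows "iter_diff absF O1bar gs (bump_extension \<xi>) bump * delta0_eigen e
           = iter_diff absF O1bar e (bump_extension \<xi>) bump * delta0_eigen gs"
proof -
  define ev where "ev hs = iter_diff absF O1bar hs (bump_extension \<xi>) bump" for hs
  have e: "length e = Suc k" "set e \<subseteq> GL2"
    unfolding e_def set_replicate_Suc using z(1) by simp_all
  have ev: "iter_diff absF O1bar hs (bump_extension \<xi>) = (\<lambda>f. ev hs * delta0 f)"
    if "length hs = Suc k" "set hs \<subseteq> GL2" for hs
    unfolding ev_def by (rule iter_diff_bump_extension[OF \<xi> ann that])
  have "(\<lambda>f. ev gs * delta0_eigen e * delta0 f) = iter_diff absF O1bar (e @ gs) (bump_extension \<xi>)"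
    by (simp add: iter_diff_append ev[OF gs] iter_diff_delta0[OF e(2)])
  also have "\<dots> = iter_diff absF O1bar (gs @ e) (bump_extension \<xi>)"
    using iter_diff_commute[OF GL2_stable_O1bar e(2) gs(2)] z(2)
    by (simp add: iter_diff_append e_def)
  also have "\<dots> = (\<lambda>f. ev e * delta0_eigen gs * delta0 f)"
    by (simp add: iter_diff_append ev[OF e] iter_diff_delta0[OF gs(2)])
  finally show ?thesis
    using fun_cong[of _ _ bump] unfolding ev_def by (metis delta0_bump mult_1_right)
qed

lemma annihilated_extension:
  assumes \<xi>: "\<xi> \<in> SdualX absF O1" and ann: "annihilated O1 k \<xi>"
  obtains \<xi>' where "\<xi>' \<in> SdualX absF O1bar" "restr1 absF \<xi>' = \<xi>" "annihilated O1bar k \<xi>'"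
proof -
  obtain z where z: "z \<in> GL2" "absF (det z) \<noteq> 1" "\<And>g. z ** g = g ** z"
    using exists_central_GL2 by blast
  define e where "e = replicate (Suc k) z"
  define ev where "ev gs = iter_diff absF O1bar gs (bump_extension \<xi>) bump" for gs
  define c where "c = - ev e / delta0_eigen e"
  define \<xi>' where "\<xi>' f = 1 * bump_extension \<xi> f + c * delta0 f" for f
  show thesis
  proof (rule that)
    show "\<xi>' \<in> SdualX absF O1bar"
      unfolding \<xi>'_def[abs_def] by (intro SdualX_linear bump_extension_SdualX \<xi> delta0_SdualX)
    show "restr1 absF \<xi>' = \<xi>"
    proof
      fix f
      show "restr1 absF \<xi>' f = \<xi> f"
        using fun_cong[OF restr1_bump_extension[OF \<xi>], of f] fun_cong[OF restr1_delta0, of f]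
          SdualX_outside[OF \<xi>, of f]
        by (auto simp: \<xi>'_def restr1_def split: if_splits)
    qed
    show "annihilated O1bar k \<xi>'"
      unfolding annihilated_def
    proof (intro allI impI)
      fix gs :: "'a mat2 list"
      assume gs: "length gs = Suc k \<and> set gs \<subseteq> GL2"
      have "ev gs * delta0_eigen e = ev e * delta0_eigen gs"
        unfolding ev_def e_def by (rule bump_extension_coefficient[OF \<xi> ann z(1,3)]) (use gs in auto)
      moreover have "delta0_eigen e \<noteq> 0"
        unfolding e_def by (rule delta0_eigen_replicate_nonzero[OF z(2)])
      ultimately have coeff: "ev gs + c * delta0_eigen gs = 0"
        by (simp add: c_def field_simps)
      have bext: "iter_diff absF O1bar gs (bump_extension \<xi>) = (\<lambda>f. ev gs * delta0 f)"
        unfolding ev_def using iter_diff_bump_extension[OF \<xi> ann] gs by blast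
      have "iter_diff absF O1bar gs \<xi>'
          = (\<lambda>f. 1 * iter_diff absF O1bar gs (bump_extension \<xi>) f + c * iter_diff absF O1bar gs delta0 f)"
        unfolding \<xi>'_def[abs_def] by (rule iter_diff_linear)
      also have "\<dots> = (\<lambda>f. (ev gs + c * delta0_eigen gs) * delta0 f)"
        using bext iter_diff_delta0[of gs 1] gs by (simp add: algebra_simps)
      finally show "iter_diff absF O1bar gs \<xi>' = (\<lambda>f. 0)"
        using coeff by simp
    qed
  qed
qed

lemma restr1_diff: "restr1 absF (\<lambda>f. \<xi> f - \<eta> f) = (\<lambda>f. restr1 absF \<xi> f - restr1 absF \<eta> f)"
  by (simp add: restr1_def fun_eq_iff)

lemma inj_on_restr1_Sgeninv: "inj_on (restr1 absF) (Sgeninv absF O1bar)"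
proof (rule inj_onI)
  fix \<xi>1 \<xi>2
  assume "\<xi>1 \<in> Sgeninv absF O1bar" "\<xi>2 \<in> Sgeninv absF O1bar"
    and eq: "restr1 absF \<xi>1 = restr1 absF \<xi>2"
  then obtain k1 k2 where \<xi>: "\<xi>1 \<in> SdualX absF O1bar" "\<xi>2 \<in> SdualX absF O1bar"
    and "annihilated O1bar k1 \<xi>1" "annihilated O1bar k2 \<xi>2"
    by (auto simp: Sgeninv_eq)
  then have "annihilated O1bar (k1 + k2) (\<lambda>f. \<xi>1 f - \<xi>2 f)"
    by (intro annihilated_diff) (auto elim: annihilated_mono)
  moreover have "restr1 absF (\<lambda>f. \<xi>1 f - \<xi>2 f) = (\<lambda>f. 0)"
    by (simp add: restr1_diff eq)
  ultimately have "(\<lambda>f. \<xi>1 f - \<xi>2 f) = (\<lambda>f. 0)"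
    by (rule annihilated_restr1_zero[OF SdualX_diff[OF \<xi>]])
  then show "\<xi>1 = \<xi>2"
    by (simp add: fun_eq_iff)
qed

lemma restr1_image_annihilated:
  "restr1 absF ` {\<xi> \<in> SdualX absF O1bar. annihilated O1bar k \<xi>} = {\<xi> \<in> SdualX absF O1. annihilated O1 k \<xi>}"
proof (intro equalityI subsetI)
  fix \<xi> assume "\<xi> \<in> restr1 absF ` {\<xi> \<in> SdualX absF O1bar. annihilated O1bar k \<xi>}"
  then show "\<xi> \<in> {\<xi> \<in> SdualX absF O1. annihilated O1 k \<xi>}"
    using restr1_SdualX restr1_annihilated by blast
next
  fix \<xi> assume "\<xi> \<in> {\<xi> \<in> SdualX absF O1. annihilated O1 k \<xi>}"
  then obtain \<xi>' where "\<xi>' \<in> SdualX absF O1bar" "restr1 absF \<xi>' = \<xi>" "annihilated O1bar k \<xi>'"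
    using annihilated_extension by blast
  then show "\<xi> \<in> restr1 absF ` {\<xi> \<in> SdualX absF O1bar. annihilated O1bar k \<xi>}"
    by blast
qed

lemma restr1_image_Sinv: "restr1 absF ` Sinv absF O1bar = Sinv absF O1"
  unfolding Sinv_eq by (rule restr1_image_annihilated)

lemma restr1_image_Sgeninv: "restr1 absF ` Sgeninv absF O1bar = Sgeninv absF O1"
proof -
  have "Sgeninv absF X = (\<Union>k. {\<xi> \<in> SdualX absF X. annihilated X k \<xi>})" for X
    by (auto simp: Sgeninv_eq)
  then show ?thesis
    by (simp add: image_UN restr1_image_annihilated)
qed

end

text \<open>The normalization of the absolute value plays no role: only its nontriviality is used,
  to find a central element of \<open>GL2\<close> whose determinant has absolute value \<open>\<noteq> 1\<close>.\<close>
theorem lemma2p4: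
  fixes absF :: "'a::field_char_0 \<Rightarrow> real"
  assumes "nonarch_local_field absF"
    and "normalized_abs absF"
  shows "bij_betw (restr1 absF) (Sinv absF O1bar) (Sinv absF O1)
       \<and> bij_betw (restr1 absF) (Sgeninv absF O1bar) (Sgeninv absF O1)"
proof -
  interpret nonarch_local_field_abs absF
    using assms(1) by unfold_locales
  have "Sinv absF O1bar \<subseteq> Sgeninv absF O1bar"
    by (auto simp: Sinv_eq Sgeninv_eq)
  then show ?thesis
    unfolding bij_betw_def
    using inj_on_restr1_Sgeninv inj_on_subset restr1_image_Sinv restr1_image_Sgeninv by blast
qed

end
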